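(* Let $v:(0,\infty)\to[0,\infty)$ be differentiable, set $\tilde v(\rho)=\rho\,v(\rho)$, and let $c_2\in\mathbb{R}$, $d>0$ be constants. Let $(\rho_s,\theta_s)$ with $\rho_s>0$ and $\tilde v(\rho_s)>0$ be an equilibrium state, and consider the linear system for $(\rho_\sigma,\theta_\sigma)(x,t)$, $x\in\mathbb{R}$, $$\partial_t\begin{pmatrix}\rho_\sigma\\ \theta_\sigma\end{pmatrix}+A_x(\rho_s,\theta_s)\,\partial_x\begin{pmatrix}\rho_\sigma\\ \theta_\sigma\end{pmatrix}=0,\qquad A_x(\rho,\theta)=\begin{pmatrix}\tilde v'(\rho)\cos\theta & -\tilde v(\rho)\sin\theta\\ -d\frac{\tilde v'(\rho)}{\rho}\sin\theta & c_2\frac{\tilde v(\rho)}{\rho}\cos\theta\end{pmatrix}.$$ Then this system is hyperbolic if $\tilde v'(\rho_s)\ge 0$, or if $$\tilde v'(\rho_s)<0\quad\text{and}\quad \frac{\left(\tilde v'(\rho_s)-c_2\frac{\tilde v(\rho_s)}{\rho_s}\right)^2}{-4d\,\frac{\tilde v'(\rho_s)\tilde v(\rho_s)}{\rho_s}}\ \ge\ \tan^2\theta_s .$$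
   Context: This system is the linearization (with viscosity $\gamma=0$), around a state depending only on $x$, of the two-dimensional Self-Organized Hydrodynamic model $\partial_t\rho+\nabla\cdot(v(\rho)\rho\Omega)=0$, $\rho[\partial_t\Omega+(c_2v(\rho)\Omega\cdot\nabla)\Omega]+d\,P_{\Omega^\perp}\nabla(v(\rho)\rho)=0$, $|\Omega|=1$, written with $\Omega=(\cos\theta,\sin\theta)$. Here "hyperbolic" means that the matrix $A_x(\rho_s,\theta_s)$ has two real eigenvalues. *)

theory Defs
  imports "HOL-Analysis.Derivative" "Jordan_Normal_Form.Char_Poly"
begin

definition vtilde :: "(real \<Rightarrow> real) \<Rightarrow> real \<Rightarrow> real" where
  "vtilde v \<rho> = \<rho> * v \<rho>"

definition A_x :: "(real \<Rightarrow> real) \<Rightarrow> real \<Rightarrow> real \<Rightarrow> real \<Rightarrow> real \<Rightarrow> real mat" where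
  "A_x v c2 d \<rho> \<theta> = mat_of_rows_list 2
     [[deriv (vtilde v) \<rho> * cos \<theta>, - vtilde v \<rho> * sin \<theta>],
      [- d * (deriv (vtilde v) \<rho> / \<rho>) * sin \<theta>, c2 * (vtilde v \<rho> / \<rho>) * cos \<theta>]]"

text \<open>Hyperbolic: the (2x2 real) matrix has two real eigenvalues (counted with
  multiplicity), i.e. its characteristic polynomial splits into real linear factors.\<close>
definition hyperbolic :: "real mat \<Rightarrow> bool" where
  "hyperbolic A \<longleftrightarrow> (\<exists>l1 l2 :: real. char_poly A = [:-l1, 1:] * [:-l2, 1:])"

end

theory Submission
  imports Defs
begin

text \<open>The characteristic polynomial of a real 2x2 matrix
  \<open>((p, q), (r, w))\<close> splits over the reals iff its discriminant
  \<open>(p - w)\<^sup>2 + 4 q r\<close> is nonnegative. For \<open>A_x\<close> one has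
  \<open>q r = d \<tilde>v' \<tilde>v / \<rho> sin\<^sup>2 \<theta>\<close>, so the discriminant is
  \<open>(\<tilde>v' - c\<^sub>2 \<tilde>v / \<rho>)\<^sup>2 cos\<^sup>2 \<theta> + 4 d \<tilde>v' \<tilde>v / \<rho> sin\<^sup>2 \<theta>\<close>: both terms are
  nonnegative if \<open>\<tilde>v' \<ge> 0\<close>, and if \<open>\<tilde>v' < 0\<close> dividing by \<open>cos\<^sup>2 \<theta>\<close> gives
  exactly the stated tangent condition.\<close>

lemma det_2x2:
  fixes A :: "'a::comm_ring_1 mat"
  assumes A: "A \<in> carrier_mat 2 2"
  shows "det A = A $$ (0,0) * A $$ (1,1) - A $$ (0,1) * A $$ (1,0)"
proof -
  have det_minor: "det (mat_delete A 0 j) = mat_delete A 0 j $$ (0,0)" for j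
    by (rule det_single) (use mat_delete_carrier[OF A, of 0 j] in simp)
  have minor00: "mat_delete A 0 0 $$ (0,0) = A $$ (1,1)"
    and minor01: "mat_delete A 0 1 $$ (0,0) = A $$ (1,0)"
    using A by (simp_all add: mat_delete_def)
  have "det A = (\<Sum>j<2. A $$ (0,j) * cofactor A 0 j)"
    by (rule laplace_expansion_row[OF A]) simp
  also have "\<dots> = A $$ (0,0) * cofactor A 0 0 + A $$ (0,1) * cofactor A 0 1"
    by (simp add: numeral_2_eq_2)
  also have "\<dots> = A $$ (0,0) * A $$ (1,1) - A $$ (0,1) * A $$ (1,0)"
    unfolding cofactor_def det_minor minor00 minor01 by simp
  finally show ?thesis .
qed

lemma mat_of_rows_list_2x2:
  "mat_of_rows_list 2 [[p, q], [r, w]] = mat 2 2 (\<lambda>(i, j). [[p, q], [r, w]] ! i ! j)"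
  by (simp add: mat_of_rows_list_def numeral_2_eq_2)

lemma char_poly_2x2:
  fixes p q r w :: "'a::comm_ring_1"
  shows "char_poly (mat_of_rows_list 2 [[p, q], [r, w]]) = [:p * w - q * r, - (p + w), 1:]"
proof -
  let ?A = "mat_of_rows_list 2 [[p, q], [r, w]]"
  have "?A \<in> carrier_mat 2 2"
    by (simp add: mat_of_rows_list_2x2)
  then have "char_poly ?A =
      [:- p, 1:] * [:- w, 1:] - [:- q:] * [:- r:]"
    unfolding char_poly_def
    by (simp add: det_2x2 char_poly_matrix_closed char_poly_matrix_def mat_of_rows_list_2x2)
  also have "\<dots> = [:p * w - q * r, - (p + w), 1:]"
    by (simp add: algebra_simps)
  finally show ?thesis .
qed

lemma monic_quadratic_splits:
  fixes T D :: real
  assumes "T\<^sup>2 - 4 * D \<ge> 0"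
  shows "\<exists>l1 l2. [:D, - T, 1:] = [:- l1, 1:] * [:- l2, 1:]"
proof -
  define s where "s = sqrt (T\<^sup>2 - 4 * D)"
  have "s\<^sup>2 = T\<^sup>2 - 4 * D"
    using assms by (simp add: s_def)
  then have product: "(T + s) / 2 * ((T - s) / 2) = D"
    by (simp add: field_simps power2_eq_square)
  have "[:- ((T + s) / 2), 1:] * [:- ((T - s) / 2), 1:]
      = [:(T + s) / 2 * ((T - s) / 2), - ((T + s) / 2) - (T - s) / 2, 1:]"
    by (simp add: algebra_simps)
  also have "\<dots> = [:D, - T, 1:]"
    unfolding product by (simp add: field_simps)
  finally have "[:- ((T + s) / 2), 1:] * [:- ((T - s) / 2), 1:] = [:D, - T, 1:]" .
  then show ?thesis
    by metis
qed

lemma hyperbolic_2x2_if_discriminant_nonneg: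
  fixes p q r w :: real
  assumes "(p - w)\<^sup>2 + 4 * (q * r) \<ge> 0"
  shows "hyperbolic (mat_of_rows_list 2 [[p, q], [r, w]])"
proof -
  have "(p + w)\<^sup>2 - 4 * (p * w - q * r) = (p - w)\<^sup>2 + 4 * (q * r)"
    by (simp add: power2_eq_square algebra_simps)
  then show ?thesis
    unfolding hyperbolic_def char_poly_2x2
    using monic_quadratic_splits[of "p + w" "p * w - q * r"] assms by simp
qed

lemma A_x_discriminant_nonneg:
  fixes a b c2 d \<rho> \<theta> :: real
  assumes d: "d > 0" and \<rho>: "\<rho> > 0" and b: "b > 0"
    and cond: "a \<ge> 0 \<or> (a < 0 \<and> cos \<theta> \<noteq> 0 \<and>
      (a - c2 * b / \<rho>)\<^sup>2 / (- 4 * d * a * b / \<rho>) \<ge> (tan \<theta>)\<^sup>2)"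
  shows "(a - c2 * b / \<rho>)\<^sup>2 * (cos \<theta>)\<^sup>2 + 4 * (d * a * b / \<rho>) * (sin \<theta>)\<^sup>2 \<ge> 0"
proof (cases "a \<ge> 0")
  case True
  then show ?thesis
    using b d \<rho> by simp
next
  case False
  with cond have cos: "cos \<theta> \<noteq> 0"
    and tan: "(a - c2 * b / \<rho>)\<^sup>2 / (- 4 * d * a * b / \<rho>) \<ge> (tan \<theta>)\<^sup>2"
    by auto
  define Y where "Y = - 4 * d * a * b / \<rho>"
  have "Y > 0"
    using False b d \<rho> by (simp add: Y_def mult_neg_pos divide_neg_pos)
  with tan have "Y * (tan \<theta>)\<^sup>2 \<le> (a - c2 * b / \<rho>)\<^sup>2"
    unfolding Y_def[symmetric] by (simp add: pos_le_divide_eq mult.commute)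
  moreover have "(tan \<theta>)\<^sup>2 * (cos \<theta>)\<^sup>2 = (sin \<theta>)\<^sup>2"
    using cos by (simp add: tan_def power_divide)
  then have "(a - c2 * b / \<rho>)\<^sup>2 * (cos \<theta>)\<^sup>2 + 4 * (d * a * b / \<rho>) * (sin \<theta>)\<^sup>2
      = (cos \<theta>)\<^sup>2 * ((a - c2 * b / \<rho>)\<^sup>2 - Y * (tan \<theta>)\<^sup>2)"
    by (simp add: Y_def algebra_simps)
  ultimately show ?thesis
    by simp
qed

theorem mainTheorem1:
  fixes v :: "real \<Rightarrow> real" and c2 d \<rho>s \<theta>s :: real
  assumes v_diff: "\<And>\<rho>. \<rho> > 0 \<Longrightarrow> v differentiable (at \<rho>)"
    and v_nonneg: "\<And>\<rho>. \<rho> > 0 \<Longrightarrow> v \<rho> \<ge> 0"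
    and d_pos: "d > 0"
    and rho_pos: "\<rho>s > 0"
    and vt_pos: "vtilde v \<rho>s > 0"
    and cond: "deriv (vtilde v) \<rho>s \<ge> 0 \<or>
      (deriv (vtilde v) \<rho>s < 0 \<and> cos \<theta>s \<noteq> 0 \<and>
       (deriv (vtilde v) \<rho>s - c2 * vtilde v \<rho>s / \<rho>s)\<^sup>2
         / (- 4 * d * deriv (vtilde v) \<rho>s * vtilde v \<rho>s / \<rho>s) \<ge> (tan \<theta>s)\<^sup>2)"
  shows "hyperbolic (A_x v c2 d \<rho>s \<theta>s)"
proof -
  define a where "a = deriv (vtilde v) \<rho>s"
  define b where "b = vtilde v \<rho>s"
  have disc: "(a - c2 * b / \<rho>s)\<^sup>2 * (cos \<theta>s)\<^sup>2 + 4 * (d * a * b / \<rho>s) * (sin \<theta>s)\<^sup>2 \<ge> 0"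
    using A_x_discriminant_nonneg[OF d_pos rho_pos] vt_pos cond by (simp add: a_def b_def)
  have "(a * cos \<theta>s - c2 * (b / \<rho>s) * cos \<theta>s)\<^sup>2
      + 4 * ((- b * sin \<theta>s) * (- d * (a / \<rho>s) * sin \<theta>s))
      = (a - c2 * b / \<rho>s)\<^sup>2 * (cos \<theta>s)\<^sup>2 + 4 * (d * a * b / \<rho>s) * (sin \<theta>s)\<^sup>2"
    by (simp add: power2_eq_square algebra_simps)
  with disc show ?thesis
    unfolding A_x_def a_def[symmetric] b_def[symmetric]
    by (intro hyperbolic_2x2_if_discriminant_nonneg) simp
qed

end
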